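(* Under the setting of the merge junction with link $I_1=[a_1,b_1]$ whose fundamental diagram satisfies (F), capacities $C_1,C_3>0$, split $\eta_1\in(0,1)$, cycle $\Delta_A>0$, fixed data $N_{ini},N_{up}$, and assuming no spillback ($S_3(t)\equiv C_3$), the Lax–Hopf solutions $N^{\Delta_A}$ and $N^0$ on $I_1$ with data $(N_{ini},N_{up},N^{\Delta_A}_{down})$ and $(N_{ini},N_{up},N^0_{down})$ satisfy, for all $(t,x)\in[0,T]\times[a_1,b_1]$, $$\big|N^{\Delta_A}(t,x)-N^0(t,x)\big|\le \eta_1(1-\eta_1)\Delta_A\min\{C_1,C_3\}\le\tfrac14\Delta_A\min\{C_1,C_3\}.$$
   Context: Assumption (F): $f:[0,\rho_j]\to[0,C]$ continuous and concave, $f(0)=f(\rho_j)=0$, $C=\max f$; $v=f'(0+)$, $-w=f'(\rho_j-)$ finite; $f^*(u)=\sup_{\rho\in[0,\rho_j]}\{f(\rho)-u\rho\}$, $u\in[-w,v]$. Lax–Hopf solution on $[a,b]$ with data $(N_{ini},N_{up},N_{down})$: with $\mathcal{C}(0,x)=N_{ini}(x)$, $\mathcal{C}(s,a)=N_{up}(s)$, $\mathcal{C}(s,b)=N_{down}(s)$ (minimum at corners), $\mathcal{C}=+\infty$ elsewhere, set $N(t,x)=\inf_{u\in[-w,v],\tau\ge0}\{\mathcal{C}(t-\tau,x-\tau u)+\tau f^*(u)\}$. Signal control: $u_1:[0,T]\to\{0,1\}$ is $\Delta_A$-periodic and, for some offset $\theta$, $u_1(t)=1$ iff $(t-\theta)\bmod\Delta_A\in[0,\eta_1\Delta_A)$.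 Effective supply: $\mathcal{S}_3^1(t)=\min\{C_1,S_3(t)\}$. Downstream data: $N^{\Delta_A}_{down}(t)=\int_0^t\mathcal{S}^1_3(\tau)u_1(\tau)\,d\tau$ (on-and-off model) and $N^0_{down}(t)=\int_0^t\eta_1\mathcal{S}^1_3(\tau)\,d\tau$ (continuum model). *)

theory Defs
  imports "HOL-Analysis.Analysis"
begin

definition fstar :: "(real \<Rightarrow> real) \<Rightarrow> real \<Rightarrow> real \<Rightarrow> real" where
  "fstar f rhoj u = (SUP rho\<in>{0..rhoj}. f rho - u * rho)"

definition valcond ::
  "real \<Rightarrow> real \<Rightarrow> real \<Rightarrow> (real \<Rightarrow> real) \<Rightarrow> (real \<Rightarrow> real) \<Rightarrow> (real \<Rightarrow> real)
    \<Rightarrow> real \<Rightarrow> real \<Rightarrow> ereal" where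
  "valcond a b T Nini Nup Ndown s y =
     min (if s = 0 \<and> y \<in> {a..b} then ereal (Nini y) else \<infinity>)
      (min (if y = a \<and> s \<in> {0..T} then ereal (Nup s) else \<infinity>)
           (if y = b \<and> s \<in> {0..T} then ereal (Ndown s) else \<infinity>))"

definition laxhopf ::
  "(real \<Rightarrow> real) \<Rightarrow> real \<Rightarrow> real \<Rightarrow> real \<Rightarrow> real \<Rightarrow> real \<Rightarrow> real
    \<Rightarrow> (real \<Rightarrow> real) \<Rightarrow> (real \<Rightarrow> real) \<Rightarrow> (real \<Rightarrow> real) \<Rightarrow> real \<Rightarrow> real \<Rightarrow> ereal" where
  "laxhopf f rhoj v w a b T Nini Nup Ndown t x =
     (INF p\<in>{(u, tau). u \<in> {-w..v} \<and> 0 \<le> tau}.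
        valcond a b T Nini Nup Ndown (t - snd p) (x - snd p * fst p)
        + ereal (snd p * fstar f rhoj (fst p)))"

definition signal :: "real \<Rightarrow> real \<Rightarrow> real \<Rightarrow> real \<Rightarrow> real" where
  "signal Delta eta theta t = (if Delta * frac ((t - theta) / Delta) < eta * Delta then 1 else 0)"

end

theory Submission
  imports Defs
begin

text \<open>
  The cumulative green time of the signal is eta t plus Delta times a sawtooth of the phase
  (t - theta) / Delta; the sawtooth takes values in [0, eta (1 - eta)].  Without spillback the
  supply is the constant min C1 C3, so the on-and-off and the continuum downstream data differ
  by at most eta (1 - eta) Delta min C1 C3.  The Lax--Hopf formula is an infimum of the value
  condition plus a cost not depending on the data, so it moves by at most as much as the
  downstream data do.
\<close>

text \<open>The integral over [0, y] of the unit-cycle signal (green on phases [0, eta)) minus eta.\<close>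
definition sawtooth :: "real \<Rightarrow> real \<Rightarrow> real" where
  "sawtooth eta y = min (frac y) eta - eta * frac y"

lemma sawtooth_bounds:
  assumes "0 \<le> eta" "eta \<le> 1"
  shows "0 \<le> sawtooth eta y" "sawtooth eta y \<le> eta * (1 - eta)"
proof -
  have "0 \<le> frac y" "frac y < 1" by (simp_all add: frac_lt_1)
  then have "0 \<le> (1 - eta) * min (frac y) eta" "0 \<le> eta * (1 - max (frac y) eta)"
    "(1 - eta) * min (frac y) eta \<le> (1 - eta) * eta" "eta * (1 - max (frac y) eta) \<le> eta * (1 - eta)"
    using assms by (simp_all add: mult_left_mono)
  then show "0 \<le> sawtooth eta y" "sawtooth eta y \<le> eta * (1 - eta)"
    unfolding sawtooth_def by (auto simp: min_def max_def algebra_simps split: if_splits)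
qed

lemma sawtooth_of_int [simp]: "0 \<le> eta \<Longrightarrow> sawtooth eta (of_int n) = 0"
  by (simp add: sawtooth_def)

lemma sawtooth_rising:
  assumes "eta < 1" "of_int n \<le> y" "y \<le> of_int n + eta"
  shows "sawtooth eta y = (1 - eta) * (y - of_int n)"
proof -
  have frac_y: "frac y = y - of_int n"
    using assms by (simp add: frac_unique_iff)
  show ?thesis
    using assms unfolding sawtooth_def frac_y by (simp add: min_def algebra_simps)
qed

lemma sawtooth_falling:
  assumes "0 \<le> eta" "of_int n + eta \<le> y" "y \<le> of_int n + 1"
  shows "sawtooth eta y = eta * (of_int n + 1 - y)"
proof (cases "y = of_int (n + 1)")
  case True
  with assms(1) show ?thesis
    using sawtooth_of_int[of eta "n + 1"] by simp
next
  case False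
  then have frac_y: "frac y = y - of_int n"
    using assms by (simp add: frac_unique_iff)
  show ?thesis
    using assms unfolding sawtooth_def frac_y by (simp add: min_def algebra_simps)
qed

lemma isCont_sawtooth:
  assumes "0 < eta" "eta < 1"
  shows "isCont (sawtooth eta) y"
proof (cases "y \<in> \<int>")
  case False
  then show ?thesis
    unfolding sawtooth_def by (intro continuous_intros continuous_frac)
next
  case True
  then obtain n where n: "y = of_int n" by (auto elim: Ints_cases)
  define U where "U = {of_int n - 1 + eta <..< of_int n + eta}"
  \<comment> \<open>Across the integer n the sawtooth joins its falling and rising branches.\<close>
  have "sawtooth eta z = max ((1 - eta) * (z - of_int n)) (eta * (of_int n - z))" if "z \<in> U" for z
  proof (cases "of_int n \<le> z")
    case True
    then show ?thesis
      using that assms sawtooth_rising[of eta n z] by (simp add: U_def max_def algebra_simps)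
  next
    case False
    then show ?thesis
      using that assms sawtooth_falling[of eta "n - 1" z]
      by (simp add: U_def max_def algebra_simps mult_le_0_iff)
  qed
  moreover have "y \<in> U" using n assms by (simp add: U_def)
  ultimately have "\<forall>\<^sub>F z in nhds y. sawtooth eta z = max ((1 - eta) * (z - of_int n)) (eta * (of_int n - z))"
    by (auto simp: U_def intro: eventually_mono[OF eventually_nhds_in_open])
  then show ?thesis
    by (subst isCont_cong) (auto intro!: continuous_intros)
qed

lemma sawtooth_has_real_derivative:
  assumes "0 \<le> eta" "eta < 1" "frac y \<noteq> 0" "frac y \<noteq> eta"
  shows "(sawtooth eta has_real_derivative (if frac y < eta then 1 else 0) - eta) (at y)"
proof -
  define n where "n = \<lfloor>y\<rfloor>"
  have frac_y: "frac y = y - of_int n" by (simp add: n_def frac_def)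
  have y: "of_int n < y" "y < of_int n + 1"
    using assms(3) frac_ge_0[of y] frac_lt_1[of y] unfolding frac_y by linarith+
  show ?thesis
  proof (cases "frac y < eta")
    case True
    have "((\<lambda>z. (1 - eta) * (z - of_int n)) has_real_derivative 1 - eta) (at y)"
      by (auto intro!: derivative_eq_intros)
    moreover have "y \<in> {of_int n <..< of_int n + eta}"
      using True y unfolding frac_y by simp
    moreover have "(1 - eta) * (z - of_int n) = sawtooth eta z"
      if "z \<in> {of_int n <..< of_int n + eta}" for z
      using that assms sawtooth_rising[of eta n z] by simp
    ultimately have "(sawtooth eta has_real_derivative 1 - eta) (at y)"
      by (rule has_field_derivative_transform_within_open[OF _ open_greaterThanLessThan])
    with True show ?thesis by simp
  next
    case False
    have "((\<lambda>z. eta * (of_int n + 1 - z)) has_real_derivative - eta) (at y)"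
      by (auto intro!: derivative_eq_intros)
    moreover have "y \<in> {of_int n + eta <..< of_int n + 1}"
      using False assms(4) y unfolding frac_y by simp
    moreover have "eta * (of_int n + 1 - z) = sawtooth eta z"
      if "z \<in> {of_int n + eta <..< of_int n + 1}" for z
      using that assms sawtooth_falling[of eta n z] by simp
    ultimately have "(sawtooth eta has_real_derivative - eta) (at y)"
      by (rule has_field_derivative_transform_within_open[OF _ open_greaterThanLessThan])
    with False show ?thesis by simp
  qed
qed

lemma signal_eq_frac:
  assumes "0 < Delta"
  shows "signal Delta eta theta t = (if frac ((t - theta) / Delta) < eta then 1 else 0)"
  using assms by (simp add: signal_def)

lemma finite_frac_level: "finite {y::real. c \<le> y \<and> y \<le> d \<and> frac y = r}"
proof (rule finite_subset)
  show "{y. c \<le> y \<and> y \<le> d \<and> frac y = r} \<subseteq> (\<lambda>k. of_int k + r) ` {\<lfloor>c\<rfloor>..\<lfloor>d\<rfloor>}"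
  proof
    fix y assume y: "y \<in> {y. c \<le> y \<and> y \<le> d \<and> frac y = r}"
    then have "y = of_int \<lfloor>y\<rfloor> + r" by (auto simp: frac_def)
    moreover have "\<lfloor>y\<rfloor> \<in> {\<lfloor>c\<rfloor>..\<lfloor>d\<rfloor>}" using y by (auto intro: floor_mono)
    ultimately show "y \<in> (\<lambda>k. of_int k + r) ` {\<lfloor>c\<rfloor>..\<lfloor>d\<rfloor>}" by blast
  qed
qed simp

definition green_time :: "real \<Rightarrow> real \<Rightarrow> real \<Rightarrow> real \<Rightarrow> real" where
  "green_time Delta eta theta t = eta * t + Delta * sawtooth eta ((t - theta) / Delta)"

lemma continuous_on_green_time:
  assumes "0 < eta" "eta < 1" "0 < Delta"
  shows "continuous_on S (green_time Delta eta theta)"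
proof (rule continuous_at_imp_continuous_on, rule ballI)
  fix t
  have "isCont (\<lambda>t. sawtooth eta ((t - theta) / Delta)) t"
    using assms(3) by (intro isCont_o2[OF _ isCont_sawtooth[OF assms(1,2)]] continuous_intros) auto
  then show "isCont (green_time Delta eta theta) t"
    unfolding green_time_def by (intro continuous_intros)
qed

lemma green_time_has_real_derivative:
  assumes "0 < eta" "eta < 1" "0 < Delta"
    and "frac ((t - theta) / Delta) \<noteq> 0" "frac ((t - theta) / Delta) \<noteq> eta"
  shows "(green_time Delta eta theta has_real_derivative signal Delta eta theta t) (at t)"
proof -
  let ?d = "(if frac ((t - theta) / Delta) < eta then 1 else 0) - eta"
  have "((\<lambda>t. (t - theta) / Delta) has_real_derivative 1 / Delta) (at t)"
    using assms(3) by (auto intro!: derivative_eq_intros)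
  from DERIV_chain2[OF sawtooth_has_real_derivative this]
  have "((\<lambda>t. sawtooth eta ((t - theta) / Delta)) has_real_derivative ?d * (1 / Delta)) (at t)"
    using assms by simp
  then have "((\<lambda>t. eta * t + Delta * sawtooth eta ((t - theta) / Delta)) has_real_derivative
      eta * 1 + Delta * (?d * (1 / Delta))) (at t)"
    by (intro DERIV_add DERIV_cmult DERIV_ident)
  then show ?thesis
    using assms(3) by (simp add: green_time_def[abs_def] signal_eq_frac)
qed

lemma signal_has_integral_green_time:
  assumes "0 < eta" "eta < 1" "0 < Delta" "0 \<le> t"
  shows "(signal Delta eta theta has_integral
           green_time Delta eta theta t - green_time Delta eta theta 0) {0..t}"
proof (rule fundamental_theorem_of_calculus_interior_strong)
  define Y where "Y s = (s - theta) / Delta" for s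
  define K where "K r = {y. Y 0 \<le> y \<and> y \<le> Y t \<and> frac y = r}" for r
  \<comment> \<open>The green light switches only where the phase passes an integer or an integer plus eta.\<close>
  let ?S = "(\<lambda>y. theta + Delta * y) ` (K 0 \<union> K eta)"
  have "s \<in> ?S" if "s \<in> {0..t}" "frac (Y s) \<in> {0, eta}" for s
  proof -
    have "Y 0 \<le> Y s" "Y s \<le> Y t"
      using that(1) assms(3) divide_right_mono[of "0 - theta" "s - theta" Delta]
        divide_right_mono[of "s - theta" "t - theta" Delta]
      unfolding Y_def by auto
    then have "Y s \<in> K 0 \<union> K eta" using that(2) by (auto simp: K_def)
    moreover have "s = theta + Delta * Y s" using assms(3) by (simp add: Y_def)
    ultimately show ?thesis by blast
  qed
  then show "\<And>s. s \<in> {0<..<t} - ?S \<Longrightarrow>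
      (green_time Delta eta theta has_vector_derivative signal Delta eta theta s) (at s)"
    using assms(1-3)
    by (auto simp: Y_def has_real_derivative_iff_has_vector_derivative[symmetric]
        intro!: green_time_has_real_derivative)
  show "finite ?S"
    unfolding K_def by (intro finite_imageI finite_UnI finite_frac_level)
qed (use assms in \<open>auto intro: continuous_on_green_time\<close>)

lemma signal_integral_deviation:
  assumes "0 < eta" "eta < 1" "0 < Delta" "0 \<le> t"
  shows "\<bar>integral {0..t} (signal Delta eta theta) - eta * t\<bar> \<le> eta * (1 - eta) * Delta"
proof -
  let ?saw = "\<lambda>s. sawtooth eta ((s - theta) / Delta)"
  have "integral {0..t} (signal Delta eta theta) - eta * t = Delta * (?saw t - ?saw 0)"
    using integral_unique[OF signal_has_integral_green_time[OF assms]]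
    by (simp add: green_time_def algebra_simps)
  moreover have "\<bar>?saw t - ?saw 0\<bar> \<le> eta * (1 - eta)"
    using sawtooth_bounds[of eta] assms(1,2) by (smt (verit))
  ultimately show ?thesis
    using assms(3) by (simp add: abs_mult mult.commute mult_left_mono)
qed

lemma on_off_flow_deviation:
  assumes "0 < eta" "eta < 1" "0 < Delta" "0 \<le> c" "0 \<le> t"
    and "\<forall>s\<in>{0..t}. u s = signal Delta eta theta s"
  shows "\<bar>integral {0..t} (\<lambda>s. c * u s) - integral {0..t} (\<lambda>s. eta * c)\<bar> \<le> eta * (1 - eta) * Delta * c"
proof -
  have on_off: "integral {0..t} (\<lambda>s. c * u s) = c * integral {0..t} (signal Delta eta theta)"
    using assms(6) by (subst integral_mult_right[symmetric], intro integral_cong) auto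
  have continuum: "integral {0..t} (\<lambda>s. eta * c) = c * (eta * t)"
    using assms(5) by simp
  have "c * \<bar>integral {0..t} (signal Delta eta theta) - eta * t\<bar> \<le> c * (eta * (1 - eta) * Delta)"
    using signal_integral_deviation[OF assms(1-3,5)] assms(4) by (rule mult_left_mono)
  then show ?thesis
    unfolding on_off continuum using assms(4) by (simp add: abs_mult ac_simps flip: right_diff_distrib)
qed

lemma mult_one_minus_le_quarter: "x * (1 - x) \<le> (1 / 4 :: real)"
  using zero_le_power2[of "x - 1 / 2"] by (simp add: power2_eq_square algebra_simps)

lemma min_le_min_add:
  fixes a b a' b' e :: ereal
  assumes "a \<le> a' + e" "b \<le> b' + e"
  shows "min a b \<le> min a' b' + e"
  using assms by (cases "a' \<le> b'") (auto simp: min_def intro: add_right_mono order.trans)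

lemma INF_le_INF_add:
  fixes f g :: "'a \<Rightarrow> ereal"
  assumes "\<And>i. i \<in> A \<Longrightarrow> f i \<le> g i + ereal e"
  shows "(INF i\<in>A. f i) \<le> (INF i\<in>A. g i) + ereal e"
proof -
  have "(INF i\<in>A. f i) - ereal e \<le> g i" if "i \<in> A" for i
    using INF_lower[OF that, of f] assms[OF that] by (simp add: ereal_minus_le_iff)
  then have "(INF i\<in>A. f i) - ereal e \<le> (INF i\<in>A. g i)"
    by (rule INF_greatest)
  then show ?thesis
    by (simp add: ereal_minus_le_iff)
qed

lemma valcond_downstream_shift:
  assumes "\<forall>s\<in>{0..T}. D1 s \<le> D2 s + e" "0 \<le> e"
  shows "valcond a b T Nini Nup D1 s y \<le> valcond a b T Nini Nup D2 s y + ereal e"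
  unfolding valcond_def using assms by (intro min_le_min_add) (auto simp: add_increasing2)

lemma laxhopf_downstream_shift:
  assumes "\<forall>s\<in>{0..T}. D1 s \<le> D2 s + e" "0 \<le> e"
  shows "laxhopf f rhoj v w a b T Nini Nup D1 t x \<le> laxhopf f rhoj v w a b T Nini Nup D2 t x + ereal e"
  unfolding laxhopf_def
proof (rule INF_le_INF_add)
  fix p :: "real \<times> real"
  let ?cost = "ereal (snd p * fstar f rhoj (fst p))"
  have "valcond a b T Nini Nup D1 (t - snd p) (x - snd p * fst p) + ?cost
      \<le> valcond a b T Nini Nup D2 (t - snd p) (x - snd p * fst p) + ereal e + ?cost"
    by (intro add_right_mono valcond_downstream_shift[OF assms])
  then show "valcond a b T Nini Nup D1 (t - snd p) (x - snd p * fst p) + ?cost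
      \<le> valcond a b T Nini Nup D2 (t - snd p) (x - snd p * fst p) + ?cost + ereal e"
    by (simp add: ac_simps)
qed

theorem theorem4p3:
  fixes f :: "real \<Rightarrow> real" and rhoj C v w :: real
    and a1 b1 T C1 C3 eta1 DeltaA :: real
    and Nini Nup S3 u1 :: "real \<Rightarrow> real"
  assumes rhoj_pos: "0 < rhoj"
    and f_cont: "continuous_on {0..rhoj} f"
    and f_concave: "concave_on {0..rhoj} f"
    and f_0: "f 0 = 0" and f_rhoj: "f rhoj = 0"
    and f_range: "f ` {0..rhoj} \<subseteq> {0..C}"
    and C_max: "C = (SUP rho\<in>{0..rhoj}. f rho)"
    and v_deriv: "(f has_real_derivative v) (at_right 0)"
    and w_deriv: "(f has_real_derivative (- w)) (at_left rhoj)"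
    and link: "a1 < b1"
    and C1_pos: "0 < C1" and C3_pos: "0 < C3"
    and eta1: "0 < eta1" "eta1 < 1"
    and Delta_pos: "0 < DeltaA"
    and u1_signal: "\<exists>theta. \<forall>t\<in>{0..T}. u1 t = signal DeltaA eta1 theta t"
    and no_spillback: "\<forall>t. S3 t = C3"
  shows "(\<forall>t\<in>{0..T}. \<forall>x\<in>{a1..b1}.
            laxhopf f rhoj v w a1 b1 T Nini Nup
               (\<lambda>t. integral {0..t} (\<lambda>s. min C1 (S3 s) * u1 s)) t x
             \<le> laxhopf f rhoj v w a1 b1 T Nini Nup
               (\<lambda>t. integral {0..t} (\<lambda>s. eta1 * min C1 (S3 s))) t x
               + ereal (eta1 * (1 - eta1) * DeltaA * min C1 C3)
          \<and> laxhopf f rhoj v w a1 b1 T Nini Nup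
               (\<lambda>t. integral {0..t} (\<lambda>s. eta1 * min C1 (S3 s))) t x
             \<le> laxhopf f rhoj v w a1 b1 T Nini Nup
               (\<lambda>t. integral {0..t} (\<lambda>s. min C1 (S3 s) * u1 s)) t x
               + ereal (eta1 * (1 - eta1) * DeltaA * min C1 C3))
     \<and> eta1 * (1 - eta1) * DeltaA * min C1 C3 \<le> DeltaA * min C1 C3 / 4"
proof -
  obtain theta where u1: "\<forall>t\<in>{0..T}. u1 t = signal DeltaA eta1 theta t"
    using u1_signal by blast
  define c where "c = min C1 C3"
  define e where "e = eta1 * (1 - eta1) * DeltaA * c"
  have constant_supply: "min C1 (S3 s) = c" for s
    using no_spillback by (simp add: c_def)
  have c_pos: "0 < c" using C1_pos C3_pos by (simp add: c_def)
  have e_nonneg: "0 \<le> e" using eta1 Delta_pos c_pos by (simp add: e_def)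
  have deviation: "\<bar>integral {0..s} (\<lambda>r. c * u1 r) - integral {0..s} (\<lambda>r. eta1 * c)\<bar> \<le> e"
    if "s \<in> {0..T}" for s
    using that u1 c_pos unfolding e_def
    by (intro on_off_flow_deviation[OF eta1 Delta_pos]) auto
  have on_off_le: "\<forall>s\<in>{0..T}. integral {0..s} (\<lambda>r. c * u1 r) \<le> integral {0..s} (\<lambda>r. eta1 * c) + e"
    and continuum_le: "\<forall>s\<in>{0..T}. integral {0..s} (\<lambda>r. eta1 * c) \<le> integral {0..s} (\<lambda>r. c * u1 r) + e"
    using deviation unfolding abs_le_iff by (smt (verit))+
  have "e \<le> DeltaA * c / 4"
    using mult_right_mono[OF mult_one_minus_le_quarter[of eta1], of "DeltaA * c"] Delta_pos c_pos
    by (simp add: e_def mult.assoc)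
  then show ?thesis
    using laxhopf_downstream_shift[OF on_off_le e_nonneg] laxhopf_downstream_shift[OF continuum_le e_nonneg]
    unfolding constant_supply c_def[symmetric] e_def[symmetric] by blast
qed

end
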